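(* Let $(\phi,y)$ be feasible and satisfy the modified condition (MC). Let $(\phi^\dagger,y^\dagger)$ be feasible such that either $\phi^\dagger\ge\phi$ coordinatewise or $\phi^\dagger\le\phi$ coordinatewise. Then $T(\phi,y)\le T(\phi^\dagger,y^\dagger)$, where $T(\phi,y)=\sum_{(i,j)\in\mathcal E}D_{ij}(F_{ij})+\sum_{i}B_i(Y_i)$.
   Context: Network model. $\mathcal G=(\mathcal V,\mathcal E)$ is a finite directed graph with $(j,i)\in\mathcal E$ whenever $(i,j)\in\mathcal E$; $\mathcal N(i)=\{j:(i,j)\in\mathcal E\}$. $\mathcal C$ is a finite catalog; item $k$ has nonempty designated server set $\mathcal S_k\subseteq\mathcal V$. Exogenous request rates $r_i(k)\ge0$. Variables: $\phi_{ij}(k)\in[0,1]$ with $\phi_{ij}(k)=0$ if $(i,j)\notin\mathcal E$, and $y_i(k)\in[0,1]$. Flow conservation: $y_i(k)+\sum_{j}\phi_{ij}(k)=1$ if $i\notin\mathcal S_k$ and $=0$ if $i\in\mathcal S_k$. A pair $(\phi,y)$ is feasible if it satisfies these constraints and the arrival rates $t_i(k)$, solving $t_i(k)=r_i(k)+\sum_j t_j(k)\phi_{ji}(k)$, are uniquely determined and nonnegative (e.g. when for each $k$ the graph with edges $\{(i,j):\phi_{ij}(k)>0\}$ is acyclic). $f_{ji}(k)=t_i(k)\phi_{ij}(k)$, $F_{ij}=\sum_k f_{ij}(k)$, $Y_i=\sum_k y_i(k)$. $D_{ij},B_i$ are continuously differentiable, increasing, convex, zero at $0$. Marginal cost: $\frac{\partial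 T}{\partial r_i(k)}=\sum_{j\in\mathcal N(i)}\phi_{ij}(k)\big(D'_{ji}(F_{ji})+\frac{\partial T}{\partial r_j(k)}\big)$, zero if $i\in\mathcal S_k$ or $y_i(k)=1$. Modified condition (MC): with $\delta_i(k)=\min\{B_i'(Y_i)/t_i(k),\ \min_{j\in\mathcal N(i)}(D'_{ji}(F_{ji})+\frac{\partial T}{\partial r_j(k)})\}$ (where $B_i'(Y_i)/t_i(k):=\infty$ if $t_i(k)=0$), for all $i,k$: $B_i'(Y_i)=t_i(k)\delta_i(k)$ if $y_i(k)>0$, $B_i'(Y_i)\ge t_i(k)\delta_i(k)$ if $y_i(k)=0$; and for all $j\in\mathcal N(i)$, $D'_{ji}(F_{ji})+\frac{\partial T}{\partial r_j(k)}=\delta_i(k)$ if $\phi_{ij}(k)>0$, $\ge\delta_i(k)$ if $\phi_{ij}(k)=0$. *)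

theory Defs
  imports "HOL-Analysis.Analysis"
begin

text \<open>Vertices have a finite type 'v, catalog items a finite type 'c.
  phi i j k is the forwarding fraction phi_ij(k), y i k is the caching variable y_i(k),
  r i k the exogenous request rate, S k the designated server set of item k.\<close>

definition nbrs :: "('v \<times> 'v) set \<Rightarrow> 'v \<Rightarrow> 'v set" where
  "nbrs E i = {j. (i, j) \<in> E}"

definition arr_eq :: "('v::finite \<Rightarrow> 'c \<Rightarrow> real) \<Rightarrow> ('v \<Rightarrow> 'v \<Rightarrow> 'c \<Rightarrow> real) \<Rightarrow> 'c \<Rightarrow> ('v \<Rightarrow> real) \<Rightarrow> bool" where
  "arr_eq r phi k t \<longleftrightarrow> (\<forall>i. t i = r i k + (\<Sum>j\<in>UNIV. t j * phi j i k))"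

definition arrival :: "('v::finite \<Rightarrow> 'c \<Rightarrow> real) \<Rightarrow> ('v \<Rightarrow> 'v \<Rightarrow> 'c \<Rightarrow> real) \<Rightarrow> 'v \<Rightarrow> 'c \<Rightarrow> real" where
  "arrival r phi i k = (THE t. arr_eq r phi k t) i"

definition feasible :: "('v::finite \<times> 'v) set \<Rightarrow> ('c \<Rightarrow> 'v set) \<Rightarrow> ('v \<Rightarrow> 'c \<Rightarrow> real)
    \<Rightarrow> ('v \<Rightarrow> 'v \<Rightarrow> 'c \<Rightarrow> real) \<Rightarrow> ('v \<Rightarrow> 'c \<Rightarrow> real) \<Rightarrow> bool" where
  "feasible E S r phi y \<longleftrightarrow>
     (\<forall>i j k. 0 \<le> phi i j k \<and> phi i j k \<le> 1) \<and>
     (\<forall>i j k. (i, j) \<notin> E \<longrightarrow> phi i j k = 0) \<and>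
     (\<forall>i k. 0 \<le> y i k \<and> y i k \<le> 1) \<and>
     (\<forall>i k. y i k + (\<Sum>j\<in>UNIV. phi i j k) = (if i \<in> S k then 0 else 1)) \<and>
     (\<forall>k. \<exists>!t. arr_eq r phi k t) \<and>
     (\<forall>i k. 0 \<le> arrival r phi i k)"

definition linkflow :: "('v::finite \<Rightarrow> 'c::finite \<Rightarrow> real) \<Rightarrow> ('v \<Rightarrow> 'v \<Rightarrow> 'c \<Rightarrow> real) \<Rightarrow> 'v \<Rightarrow> 'v \<Rightarrow> real" where
  "linkflow r phi i j = (\<Sum>k\<in>UNIV. arrival r phi j k * phi j i k)"

definition cacheload :: "('v \<Rightarrow> 'c::finite \<Rightarrow> real) \<Rightarrow> 'v \<Rightarrow> real" where
  "cacheload y i = (\<Sum>k\<in>UNIV. y i k)"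

definition total_cost :: "('v::finite \<times> 'v) set \<Rightarrow> ('v \<Rightarrow> 'v \<Rightarrow> real \<Rightarrow> real) \<Rightarrow> ('v \<Rightarrow> real \<Rightarrow> real)
    \<Rightarrow> ('v \<Rightarrow> 'c::finite \<Rightarrow> real) \<Rightarrow> ('v \<Rightarrow> 'v \<Rightarrow> 'c \<Rightarrow> real) \<Rightarrow> ('v \<Rightarrow> 'c \<Rightarrow> real) \<Rightarrow> real" where
  "total_cost E D B r phi y =
     (\<Sum>(i, j)\<in>E. D i j (linkflow r phi i j)) + (\<Sum>i\<in>UNIV. B i (cacheload y i))"

text \<open>Recursive equations defining the marginal costs dT/dr_i(k) (for item k);
  D' i j is the derivative of D i j.\<close>
definition mc_eq :: "('v::finite \<times> 'v) set \<Rightarrow> ('c::finite \<Rightarrow> 'v set) \<Rightarrow> ('v \<Rightarrow> 'v \<Rightarrow> real \<Rightarrow> real)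
    \<Rightarrow> ('v \<Rightarrow> 'c \<Rightarrow> real) \<Rightarrow> ('v \<Rightarrow> 'v \<Rightarrow> 'c \<Rightarrow> real) \<Rightarrow> ('v \<Rightarrow> 'c \<Rightarrow> real) \<Rightarrow> 'c \<Rightarrow> ('v \<Rightarrow> real) \<Rightarrow> bool" where
  "mc_eq E S D' r phi y k m \<longleftrightarrow>
     (\<forall>i. m i = (if i \<in> S k \<or> y i k = 1 then 0
                 else (\<Sum>j\<in>nbrs E i. phi i j k * (D' j i (linkflow r phi j i) + m j))))"

definition marginal :: "('v::finite \<times> 'v) set \<Rightarrow> ('c::finite \<Rightarrow> 'v set) \<Rightarrow> ('v \<Rightarrow> 'v \<Rightarrow> real \<Rightarrow> real)
    \<Rightarrow> ('v \<Rightarrow> 'c \<Rightarrow> real) \<Rightarrow> ('v \<Rightarrow> 'v \<Rightarrow> 'c \<Rightarrow> real) \<Rightarrow> ('v \<Rightarrow> 'c \<Rightarrow> real) \<Rightarrow> 'v \<Rightarrow> 'c \<Rightarrow> real" where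
  "marginal E S D' r phi y i k = (THE m. mc_eq E S D' r phi y k m) i"

text \<open>delta_i(k) as an extended real: B_i'(Y_i)/t_i(k) is \<infinity> when t_i(k)=0, and the
  minimum over an empty neighbour set is \<infinity>.\<close>
definition delta :: "('v::finite \<times> 'v) set \<Rightarrow> ('c::finite \<Rightarrow> 'v set) \<Rightarrow> ('v \<Rightarrow> 'v \<Rightarrow> real \<Rightarrow> real)
    \<Rightarrow> ('v \<Rightarrow> real \<Rightarrow> real) \<Rightarrow> ('v \<Rightarrow> 'c \<Rightarrow> real) \<Rightarrow> ('v \<Rightarrow> 'v \<Rightarrow> 'c \<Rightarrow> real) \<Rightarrow> ('v \<Rightarrow> 'c \<Rightarrow> real)
    \<Rightarrow> 'v \<Rightarrow> 'c \<Rightarrow> ereal" where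
  "delta E S D' B' r phi y i k =
     min (if arrival r phi i k = 0 then \<infinity>
          else ereal (B' i (cacheload y i) / arrival r phi i k))
         (INF j\<in>nbrs E i. ereal (D' j i (linkflow r phi j i) + marginal E S D' r phi y j k))"

definition MC :: "('v::finite \<times> 'v) set \<Rightarrow> ('c::finite \<Rightarrow> 'v set) \<Rightarrow> ('v \<Rightarrow> 'v \<Rightarrow> real \<Rightarrow> real)
    \<Rightarrow> ('v \<Rightarrow> real \<Rightarrow> real) \<Rightarrow> ('v \<Rightarrow> 'c \<Rightarrow> real) \<Rightarrow> ('v \<Rightarrow> 'v \<Rightarrow> 'c \<Rightarrow> real) \<Rightarrow> ('v \<Rightarrow> 'c \<Rightarrow> real) \<Rightarrow> bool" where
  "MC E S D' B' r phi y \<longleftrightarrow>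
     (\<forall>i k.
        (y i k > 0 \<longrightarrow> ereal (B' i (cacheload y i)) = ereal (arrival r phi i k) * delta E S D' B' r phi y i k) \<and>
        (y i k = 0 \<longrightarrow> ereal (B' i (cacheload y i)) \<ge> ereal (arrival r phi i k) * delta E S D' B' r phi y i k) \<and>
        (\<forall>j\<in>nbrs E i.
           (phi i j k > 0 \<longrightarrow> ereal (D' j i (linkflow r phi j i) + marginal E S D' r phi y j k) = delta E S D' B' r phi y i k) \<and>
           (phi i j k = 0 \<longrightarrow> ereal (D' j i (linkflow r phi j i) + marginal E S D' r phi y j k) \<ge> delta E S D' B' r phi y i k)))"

definition cost_fun :: "(real \<Rightarrow> real) \<Rightarrow> (real \<Rightarrow> real) \<Rightarrow> bool" where
  "cost_fun g g' \<longleftrightarrow>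
     (\<forall>x\<ge>0. (g has_real_derivative g' x) (at x within {0..})) \<and>
     continuous_on {0..} g' \<and> mono_on {0..} g \<and> convex_on {0..} g \<and> g 0 = 0"

end

theory Submission
  imports Defs
begin

text \<open>By convexity of the link and cache costs, \<open>T(\<phi>', y') - T(\<phi>, y)\<close> is bounded below by the
  first-order change, which splits into one term per item. For a fixed item the marginal costs
  \<open>\<partial>T/\<partial>r\<close> solve a potential equation dual to the arrival equation, so the link part telescopes into
  \<open>\<Sum>\<^sub>i t'\<^sub>i (\<Sum>\<^sub>j \<phi>'\<^sub>i\<^sub>j (D'\<^sub>j\<^sub>i + \<partial>T/\<partial>r\<^sub>j) - \<partial>T/\<partial>r\<^sub>i)\<close>. By MC every neighbour used by \<open>\<phi>\<close> attains the
  minimal value \<open>\<delta>\<^sub>i\<close>, and \<open>B'\<^sub>i = t\<^sub>i \<delta>\<^sub>i\<close> wherever something is cached; hence node \<open>i\<close> contributes at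
  least \<open>(y'\<^sub>i - y\<^sub>i)(B'\<^sub>i - t'\<^sub>i \<delta>\<^sub>i)\<close>. This is nonnegative because a coordinatewise monotone change
  of \<open>\<phi>\<close> moves arrival rates and caching variables in opposite directions.\<close>

section \<open>Cost functions\<close>

lemma cost_fun_has_real_derivative:
  assumes "cost_fun g g'" and "0 < x"
  shows "(g has_real_derivative g' x) (at x)"
proof -
  have "(g has_real_derivative g' x) (at x within {0..})"
    using assms unfolding cost_fun_def by simp
  moreover have "x \<in> interior {0..}"
    using assms(2) by simp
  ultimately show ?thesis
    by (metis at_within_interior)
qed

lemma cost_fun_tendsto_at_right_0:
  assumes "cost_fun g g'"
  shows "(g' \<longlongrightarrow> g' 0) (at_right 0)" and "(g \<longlongrightarrow> g 0) (at_right 0)"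
proof -
  have at_right_le: "at_right 0 \<le> at (0::real) within {0..}"
    by (rule at_le) auto
  have "continuous_on {0..} g'"
    using assms unfolding cost_fun_def by blast
  then have "(g' \<longlongrightarrow> g' 0) (at 0 within {0..})"
    by (simp add: continuous_on_def)
  then show "(g' \<longlongrightarrow> g' 0) (at_right 0)"
    using at_right_le by (rule tendsto_mono[rotated])
  have "(g has_real_derivative g' 0) (at 0 within {0..})"
    using assms unfolding cost_fun_def by simp
  then have "(g \<longlongrightarrow> g 0) (at 0 within {0..})"
    using DERIV_continuous continuous_within by blast
  then show "(g \<longlongrightarrow> g 0) (at_right 0)"
    using at_right_le by (rule tendsto_mono[rotated])
qed

lemma cost_fun_deriv_nonneg:
  assumes "cost_fun g g'" and "0 \<le> x"
  shows "0 \<le> g' x"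
proof -
  have pos: "0 \<le> g' c" if "0 < c" for c
  proof (rule mono_on_imp_deriv_nonneg)
    show "mono_on {0..} g"
      using assms(1) unfolding cost_fun_def by blast
    show "(g has_real_derivative g' c) (at c)"
      using assms(1) that by (rule cost_fun_has_real_derivative)
  qed (use that in simp)
  show ?thesis
  proof (cases "x = 0")
    case True
    have "\<forall>\<^sub>F c in at_right 0. 0 \<le> g' c"
      by (rule eventually_at_rightI[of 0 1]) (auto intro: pos)
    then have "0 \<le> g' 0"
      by (rule tendsto_lowerbound[OF cost_fun_tendsto_at_right_0(1)[OF assms(1)]]) simp
    with True show ?thesis by simp
  qed (use pos assms(2) in simp)
qed

text \<open>At the boundary point 0 the tangent inequality is obtained as a limit from the interior.\<close>
lemma cost_fun_above_tangent:
  assumes "cost_fun g g'" and "0 \<le> x" and "0 \<le> c"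
  shows "g' c * (x - c) \<le> g x - g c"
proof -
  have pos: "g' c * (x - c) \<le> g x - g c" if "0 < c" for c
  proof (rule convex_on_imp_above_tangent)
    show "convex_on {0..} g"
      using assms(1) unfolding cost_fun_def by blast
    show "(g has_real_derivative g' c) (at c within {0..})"
      using assms(1) that unfolding cost_fun_def by simp
  qed (use that assms(2) in auto)
  show ?thesis
  proof (cases "c = 0")
    case True
    have "((\<lambda>c. g x - g c) \<longlongrightarrow> g x - g 0) (at_right 0)"
      by (intro tendsto_intros cost_fun_tendsto_at_right_0(2)[OF assms(1)])
    moreover have "((\<lambda>c. g' c * (x - c)) \<longlongrightarrow> g' 0 * (x - 0)) (at_right 0)"
      by (intro tendsto_intros cost_fun_tendsto_at_right_0(1)[OF assms(1)])
    moreover have "\<forall>\<^sub>F c in at_right 0. g' c * (x - c) \<le> g x - g c"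
      by (rule eventually_at_rightI[of 0 1]) (auto intro: pos)
    ultimately have "g' 0 * (x - 0) \<le> g x - g 0"
      by (rule tendsto_le[OF trivial_limit_at_right_real])
    with True show ?thesis by simp
  qed (use pos assms(3) in simp)
qed

section \<open>Inflow and potential equations of a substochastic routing matrix\<close>

definition id_minus_transpose :: "('v::finite \<Rightarrow> 'v \<Rightarrow> real) \<Rightarrow> real^'v^'v" where
  "id_minus_transpose P = (\<chi> i j. of_bool (i = j) - P j i)"

lemma id_minus_transpose_mult_vec:
  "id_minus_transpose P *v (\<chi> i. t i) = (\<chi> i. t i - (\<Sum>j\<in>UNIV. t j * P j i))"
proof -
  have "(\<Sum>j\<in>UNIV. t j * (of_bool (i = j) - P j i)) = t i - (\<Sum>j\<in>UNIV. t j * P j i)" for i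
    by (simp add: right_diff_distrib sum_subtractf of_bool_def if_distrib[of "(*) _"] cong: if_cong)
  then show ?thesis
    by (simp add: vec_eq_iff id_minus_transpose_def matrix_vector_mult_def mult.commute)
qed

lemma transpose_id_minus_transpose_mult_vec:
  "transpose (id_minus_transpose P) *v (\<chi> i. m i) = (\<chi> i. m i - (\<Sum>j\<in>UNIV. P i j * m j))"
proof -
  have "(\<Sum>j\<in>UNIV. (of_bool (j = i) - P i j) * m j) = m i - (\<Sum>j\<in>UNIV. P i j * m j)" for i
    by (simp add: left_diff_distrib sum_subtractf of_bool_def if_distrib[of "\<lambda>a. a * _"] cong: if_cong)
  then show ?thesis
    by (simp add: vec_eq_iff id_minus_transpose_def transpose_def matrix_vector_mult_def)
qed

lemma inflow_eq_iff:
  "(\<forall>i. t i = c i + (\<Sum>j\<in>UNIV. t j * P j i))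
     \<longleftrightarrow> id_minus_transpose P *v (\<chi> i. t i) = (\<chi> i. c i)"
  by (auto simp: id_minus_transpose_mult_vec vec_eq_iff algebra_simps)

lemma potential_eq_iff:
  "(\<forall>i. m i = c i + (\<Sum>j\<in>UNIV. P i j * m j))
     \<longleftrightarrow> transpose (id_minus_transpose P) *v (\<chi> i. m i) = (\<chi> i. c i)"
  unfolding transpose_id_minus_transpose_mult_vec vec_eq_iff by (auto simp: algebra_simps)

lemma ex1_vec_lambda:
  assumes "\<exists>!x :: 'a^'n. Q x"
  shows "\<exists>!f. Q (\<chi> i. f i)"
proof -
  obtain x where x: "Q x" and uniq: "\<And>z. Q z \<Longrightarrow> z = x"
    using assms by blast
  show ?thesis
  proof (rule ex1I[of _ "vec_nth x"])
    show "Q (\<chi> i. x $ i)"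
      using x by simp
  next
    fix f assume "Q (\<chi> i. f i)"
    then have "(\<chi> i. f i) = x"
      by (rule uniq)
    then show "f = vec_nth x"
      by auto
  qed
qed

lemma invertible_ex1_mult_vec:
  fixes A :: "'a::field^'n^'n"
  assumes "invertible A"
  shows "\<exists>!x. A *v x = b"
  using assms by (simp add: invertible_eq_bij bij_iff)

lemma invertible_id_minus_transpose:
  assumes "\<exists>!t. \<forall>i. t i = r i + (\<Sum>j\<in>UNIV. t j * P j i)"
  shows "invertible (id_minus_transpose P)"
proof -
  let ?A = "id_minus_transpose P"
  obtain t where t: "?A *v (\<chi> i. t i) = (\<chi> i. r i)"
    and uniq: "\<And>s. ?A *v (\<chi> i. s i) = (\<chi> i. r i) \<Longrightarrow> s = t"
    using assms unfolding inflow_eq_iff by blast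
  have "x = 0" if "?A *v x = 0" for x
  proof -
    have "(\<chi> i. t i + x $ i) = (\<chi> i. t i) + x"
      by (simp add: vec_eq_iff)
    then have "?A *v (\<chi> i. t i + x $ i) = (\<chi> i. r i)"
      using t that by (simp add: matrix_vector_right_distrib)
    then have "(\<lambda>i. t i + x $ i) = t"
      by (rule uniq)
    then show "x = 0"
      by (simp add: vec_eq_iff fun_eq_iff)
  qed
  then have "\<exists>B. B ** ?A = mat 1"
    by (simp add: matrix_left_invertible_ker)
  then show ?thesis
    by (meson invertible_def matrix_left_right_inverse)
qed

lemma ex1_inflow_solution:
  assumes "invertible (id_minus_transpose P)"
  shows "\<exists>!t. \<forall>i. t i = c i + (\<Sum>j\<in>UNIV. t j * P j i)"
  unfolding inflow_eq_iff by (rule ex1_vec_lambda, rule invertible_ex1_mult_vec) fact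

lemma ex1_potential_solution:
  assumes "invertible (id_minus_transpose P)"
  shows "\<exists>!m. \<forall>i. m i = c i + (\<Sum>j\<in>UNIV. P i j * m j)"
  unfolding potential_eq_iff
  by (rule ex1_vec_lambda, rule invertible_ex1_mult_vec, rule transpose_invertible) fact

lemma sum_pairing_transpose:
  fixes P :: "'v::finite \<Rightarrow> 'v \<Rightarrow> 'a::comm_semiring_1"
  shows "(\<Sum>i\<in>UNIV. (\<Sum>j\<in>UNIV. z j * P j i) * m i) = (\<Sum>i\<in>UNIV. z i * (\<Sum>j\<in>UNIV. P i j * m j))"
  by (simp add: sum_distrib_left sum_distrib_right mult.assoc) (rule sum.swap)

lemma subinvariant_imp_invariant:
  fixes P :: "'v::finite \<Rightarrow> 'v \<Rightarrow> real"
  assumes row_sum: "\<And>i. (\<Sum>j\<in>UNIV. P i j) \<le> 1"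
    and w_nonneg: "\<And>i. 0 \<le> w i"
    and sub: "\<And>i. w i \<le> (\<Sum>j\<in>UNIV. w j * P j i)"
  shows "w i = (\<Sum>j\<in>UNIV. w j * P j i)"
proof -
  define f where "f i = (\<Sum>j\<in>UNIV. w j * P j i) - w i" for i
  have f_nonneg: "0 \<le> f i" for i
    using sub[of i] by (simp add: f_def)
  have "(\<Sum>i\<in>UNIV. \<Sum>j\<in>UNIV. w j * P j i) = (\<Sum>j\<in>UNIV. w j * (\<Sum>i\<in>UNIV. P j i))"
    by (subst sum.swap) (simp add: sum_distrib_left)
  also have "\<dots> \<le> (\<Sum>j\<in>UNIV. w j)"
    by (rule sum_mono) (rule mult_left_le[OF row_sum w_nonneg])
  finally have "sum f UNIV \<le> 0"
    by (simp add: f_def sum_subtractf)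
  then have "sum f UNIV = 0"
    by (meson order_antisym sum_nonneg f_nonneg)
  then have "f i = 0"
    using sum_nonneg_eq_0_iff[of UNIV f] f_nonneg by simp
  then show ?thesis
    by (simp add: f_def)
qed

text \<open>The negative part of \<open>t\<close> is subinvariant, hence invariant because the row sums are at
  most 1, hence zero by invertibility.\<close>
lemma inflow_solution_nonneg:
  fixes P :: "'v::finite \<Rightarrow> 'v \<Rightarrow> real"
  assumes inv: "invertible (id_minus_transpose P)"
    and P_nonneg: "\<And>i j. 0 \<le> P i j" and row_sum: "\<And>i. (\<Sum>j\<in>UNIV. P i j) \<le> 1"
    and sol: "\<And>i. t i = c i + (\<Sum>j\<in>UNIV. t j * P j i)" and c_nonneg: "\<And>i. 0 \<le> c i"
  shows "0 \<le> t i"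
proof -
  define w where "w i = max (- t i) 0" for i
  have w_nonneg: "0 \<le> w i" for i
    by (simp add: w_def)
  have sub: "w i \<le> (\<Sum>j\<in>UNIV. w j * P j i)" for i
  proof (cases "0 \<le> t i")
    case True
    then show ?thesis
      by (simp add: w_def sum_nonneg P_nonneg)
  next
    case False
    then have "w i = - t i"
      by (simp add: w_def)
    also have "\<dots> \<le> - (\<Sum>j\<in>UNIV. t j * P j i)"
      using sol[of i] c_nonneg[of i] by linarith
    also have "\<dots> = (\<Sum>j\<in>UNIV. - t j * P j i)"
      by (simp add: sum_negf)
    also have "\<dots> \<le> (\<Sum>j\<in>UNIV. w j * P j i)"
      by (intro sum_mono mult_right_mono) (simp_all add: w_def P_nonneg)
    finally show ?thesis .
  qed
  define Q where "Q s \<longleftrightarrow> (\<forall>i. s i = 0 + (\<Sum>j\<in>UNIV. s j * P j i))" for s :: "'v \<Rightarrow> real"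
  have "\<exists>!s. Q s"
    unfolding Q_def by (rule ex1_inflow_solution[OF inv])
  moreover have "Q w"
    unfolding Q_def add_0 using subinvariant_imp_invariant[OF row_sum w_nonneg sub] by blast
  moreover have "Q (\<lambda>_. 0)"
    by (simp add: Q_def)
  ultimately have "w = (\<lambda>_. 0)"
    by blast
  then have "max (- t i) 0 = 0"
    unfolding w_def by metis
  then show ?thesis
    by linarith
qed

text \<open>Duality: with \<open>z\<close> the inflow solution for the unit source at \<open>i\<close>,
  \<open>m i = \<langle>z - z P, m\<rangle> = \<langle>z, m - P m\<rangle> = \<langle>z, c\<rangle>\<close>.\<close>
lemma potential_solution_nonneg:
  fixes P :: "'v::finite \<Rightarrow> 'v \<Rightarrow> real"
  assumes inv: "invertible (id_minus_transpose P)"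
    and P_nonneg: "\<And>i j. 0 \<le> P i j" and row_sum: "\<And>i. (\<Sum>j\<in>UNIV. P i j) \<le> 1"
    and sol: "\<And>i. m i = c i + (\<Sum>j\<in>UNIV. P i j * m j)" and c_nonneg: "\<And>i. 0 \<le> c i"
  shows "0 \<le> m i"
proof -
  obtain z where z: "\<And>k. z k = of_bool (k = i) + (\<Sum>j\<in>UNIV. z j * P j k)"
    using ex1_inflow_solution[OF inv, of "\<lambda>k. of_bool (k = i)"] by blast
  have z_nonneg: "0 \<le> z k" for k
    by (rule inflow_solution_nonneg[OF inv P_nonneg row_sum z]) simp
  have unit: "of_bool (k = i) = z k - (\<Sum>j\<in>UNIV. z j * P j k)" for k
    using z[of k] by linarith
  have c: "c k = m k - (\<Sum>j\<in>UNIV. P k j * m j)" for k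
    using sol[of k] by linarith
  have "m i = (\<Sum>k\<in>UNIV. of_bool (k = i) * m k)"
    by simp
  also have "\<dots> = (\<Sum>k\<in>UNIV. z k * m k) - (\<Sum>k\<in>UNIV. (\<Sum>j\<in>UNIV. z j * P j k) * m k)"
    unfolding unit by (simp add: left_diff_distrib sum_subtractf)
  also have "\<dots> = (\<Sum>k\<in>UNIV. z k * c k)"
    unfolding c by (simp add: sum_pairing_transpose right_diff_distrib sum_subtractf)
  also have "\<dots> \<ge> 0"
    by (simp add: sum_nonneg z_nonneg c_nonneg)
  finally show ?thesis .
qed

lemma inflow_solution_mono:
  fixes P P' :: "'v::finite \<Rightarrow> 'v \<Rightarrow> real"
  assumes inv': "invertible (id_minus_transpose P')"
    and P_nonneg: "\<And>i j. 0 \<le> P i j" and le: "\<And>i j. P i j \<le> P' i j"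
    and row_sum': "\<And>i. (\<Sum>j\<in>UNIV. P' i j) \<le> 1"
    and t: "\<And>i. t i = r i + (\<Sum>j\<in>UNIV. t j * P j i)"
    and t': "\<And>i. t' i = r i + (\<Sum>j\<in>UNIV. t' j * P' j i)"
    and t_nonneg: "\<And>i. 0 \<le> t i"
  shows "t i \<le> t' i"
proof -
  have regroup: "(\<Sum>j\<in>UNIV. t j * (P' j i - P j i)) + (\<Sum>j\<in>UNIV. (t' j - t j) * P' j i)
      = (\<Sum>j\<in>UNIV. t' j * P' j i) - (\<Sum>j\<in>UNIV. t j * P j i)" for i
    by (simp add: algebra_simps sum_subtractf)
  have "t' i - t i = (\<Sum>j\<in>UNIV. t j * (P' j i - P j i)) + (\<Sum>j\<in>UNIV. (t' j - t j) * P' j i)" for i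
    using regroup[of i] t[of i] t'[of i] by linarith
  then have "0 \<le> t' i - t i"
    by (rule inflow_solution_nonneg[OF inv' order_trans[OF P_nonneg le] row_sum'])
      (simp add: sum_nonneg t_nonneg le)
  then show ?thesis
    by simp
qed

lemma potential_telescoping:
  fixes P P' d :: "'v::finite \<Rightarrow> 'v \<Rightarrow> real"
  assumes t: "\<And>i. t i = r i + (\<Sum>j\<in>UNIV. t j * P j i)"
    and t': "\<And>i. t' i = r i + (\<Sum>j\<in>UNIV. t' j * P' j i)"
    and M: "\<And>i. M i = (\<Sum>j\<in>UNIV. P i j * (d i j + M j))"
  shows "(\<Sum>i\<in>UNIV. \<Sum>j\<in>UNIV. d i j * (t' i * P' i j - t i * P i j))
       = (\<Sum>i\<in>UNIV. t' i * ((\<Sum>j\<in>UNIV. P' i j * (d i j + M j)) - M i))"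
proof -
  have pairing: "(\<Sum>i\<in>UNIV. s i * (\<Sum>j\<in>UNIV. Q i j * M j)) = (\<Sum>i\<in>UNIV. (s i - r i) * M i)"
    if s: "\<And>i. s i = r i + (\<Sum>j\<in>UNIV. s j * Q j i)" for s and Q :: "'v \<Rightarrow> 'v \<Rightarrow> real"
  proof -
    have "s i - r i = (\<Sum>j\<in>UNIV. s j * Q j i)" for i
      using s[of i] by linarith
    then show ?thesis
      by (simp add: sum_pairing_transpose)
  qed
  define hop_cost where "hop_cost s Q = (\<Sum>i\<in>UNIV. s i * (\<Sum>j\<in>UNIV. Q i j * d i j))"
    for s and Q :: "'v \<Rightarrow> 'v \<Rightarrow> real"
  have "(\<Sum>i\<in>UNIV. t i * M i) = (\<Sum>i\<in>UNIV. t i * (\<Sum>j\<in>UNIV. P i j * (d i j + M j)))"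
    using M by (metis (no_types))
  also have "\<dots> = hop_cost t P + (\<Sum>i\<in>UNIV. (t i - r i) * M i)"
    by (simp add: hop_cost_def pairing[OF t, symmetric] distrib_left sum.distrib)
  finally have hop_cost_t: "hop_cost t P = (\<Sum>i\<in>UNIV. r i * M i)"
    by (simp add: left_diff_distrib sum_subtractf)
  have "(\<Sum>i\<in>UNIV. t' i * ((\<Sum>j\<in>UNIV. P' i j * (d i j + M j)) - M i))
      = hop_cost t' P' + (\<Sum>i\<in>UNIV. (t' i - r i) * M i) - (\<Sum>i\<in>UNIV. t' i * M i)"
    by (simp add: hop_cost_def pairing[OF t', symmetric] distrib_left right_diff_distrib
        sum.distrib sum_subtractf)
  also have "\<dots> = hop_cost t' P' - hop_cost t P"
    by (simp add: hop_cost_t left_diff_distrib sum_subtractf)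
  also have "\<dots> = (\<Sum>i\<in>UNIV. \<Sum>j\<in>UNIV. d i j * (t' i * P' i j - t i * P i j))"
    by (simp add: hop_cost_def sum_distrib_left right_diff_distrib sum_subtractf algebra_simps)
  finally show ?thesis
    by simp
qed

section \<open>The inequality at a single node\<close>

lemma routing_gap_ge:
  fixes P P' q :: "'v::finite \<Rightarrow> real"
  assumes P_nonneg: "\<And>j. 0 \<le> P j" and P'_nonneg: "\<And>j. 0 \<le> P' j"
    and P_supp: "\<And>j. j \<notin> N \<Longrightarrow> P j = 0" and P'_supp: "\<And>j. j \<notin> N \<Longrightarrow> P' j = 0"
    and min: "\<And>j. j \<in> N \<Longrightarrow> \<delta> \<le> q j"
    and active: "\<And>j. j \<in> N \<Longrightarrow> 0 < P j \<Longrightarrow> q j = \<delta>"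
  shows "\<delta> * ((\<Sum>j\<in>UNIV. P' j) - (\<Sum>j\<in>UNIV. P j))
           \<le> (\<Sum>j\<in>UNIV. P' j * q j) - (\<Sum>j\<in>UNIV. P j * q j)"
proof -
  have "P j * q j = \<delta> * P j" for j
    using P_nonneg[of j] P_supp[of j] active[of j] by (cases "P j = 0") auto
  then have "(\<Sum>j\<in>UNIV. P j * q j) = (\<Sum>j\<in>UNIV. \<delta> * P j)"
    by (rule sum.cong[OF refl])
  also have "\<dots> = \<delta> * (\<Sum>j\<in>UNIV. P j)"
    by (simp add: sum_distrib_left)
  finally have "(\<Sum>j\<in>UNIV. P j * q j) = \<delta> * (\<Sum>j\<in>UNIV. P j)" .
  moreover have "P' j * \<delta> \<le> P' j * q j" for j
  proof (cases "j \<in> N")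
    case True
    then show ?thesis
      by (rule mult_left_mono[OF min P'_nonneg])
  qed (simp add: P'_supp)
  then have "\<delta> * (\<Sum>j\<in>UNIV. P' j) \<le> (\<Sum>j\<in>UNIV. P' j * q j)"
    by (simp add: sum_distrib_right mult.commute[of \<delta>] sum_mono)
  ultimately show ?thesis
    by (simp add: right_diff_distrib)
qed

lemma caching_gap_nonneg:
  fixes \<delta> :: real
  assumes \<delta>_nonneg: "0 \<le> \<delta>" and y_nonneg: "0 \<le> y" and y'_nonneg: "0 \<le> y'"
    and cached: "0 < y \<Longrightarrow> b = t * \<delta>" and uncached: "y = 0 \<Longrightarrow> t * \<delta> \<le> b"
    and opposite: "(t \<le> t' \<and> y' \<le> y) \<or> (t' \<le> t \<and> y \<le> y')"
  shows "0 \<le> (y' - y) * (b - t' * \<delta>)"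
proof (cases "0 < y")
  case True
  have "0 \<le> (y' - y) * (t - t')"
    using opposite
  proof
    assume "t \<le> t' \<and> y' \<le> y"
    then show ?thesis
      by (simp add: mult_nonpos_nonpos)
  next
    assume "t' \<le> t \<and> y \<le> y'"
    then show ?thesis
      by simp
  qed
  then have "0 \<le> (y' - y) * (t - t') * \<delta>"
    using \<delta>_nonneg by simp
  moreover have "(y' - y) * (b - t' * \<delta>) = (y' - y) * (t - t') * \<delta>"
    using cached[OF True] by (simp add: algebra_simps)
  ultimately show ?thesis
    by argo
next
  case False
  then have "y = 0"
    using y_nonneg by simp
  show ?thesis
  proof (cases "t' \<le> t")
    case True
    then have "t' * \<delta> \<le> t * \<delta>"
      using \<delta>_nonneg by (rule mult_right_mono)
    then have "t' * \<delta> \<le> b"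
      using uncached[OF \<open>y = 0\<close>] by linarith
    then show ?thesis
      using \<open>y = 0\<close> y'_nonneg by simp
  next
    case False
    then have "y' = 0"
      using opposite \<open>y = 0\<close> y'_nonneg by linarith
    then show ?thesis
      using \<open>y = 0\<close> by simp
  qed
qed

text \<open>\<open>\<delta>\<close> is finite as soon as the node has a neighbour; a node without neighbours
  forwards nothing, so both of its routing rows vanish.\<close>
lemma node_gap_nonneg:
  fixes P P' q :: "'v::finite \<Rightarrow> real" and \<delta> :: ereal
  assumes P_nonneg: "\<And>j. 0 \<le> P j" and P'_nonneg: "\<And>j. 0 \<le> P' j"
    and P_supp: "\<And>j. j \<notin> N \<Longrightarrow> P j = 0" and P'_supp: "\<And>j. j \<notin> N \<Longrightarrow> P' j = 0"
    and conservation: "y + (\<Sum>j\<in>UNIV. P j) = y' + (\<Sum>j\<in>UNIV. P' j)"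
    and min: "\<And>j. j \<in> N \<Longrightarrow> \<delta> \<le> ereal (q j)"
    and active: "\<And>j. j \<in> N \<Longrightarrow> 0 < P j \<Longrightarrow> ereal (q j) = \<delta>"
    and \<delta>_nonneg: "0 \<le> \<delta>"
    and cached: "0 < y \<Longrightarrow> ereal b = ereal t * \<delta>"
    and uncached: "y = 0 \<Longrightarrow> ereal t * \<delta> \<le> ereal b"
    and y_nonneg: "0 \<le> y" and y'_nonneg: "0 \<le> y'" and t'_nonneg: "0 \<le> t'"
    and opposite: "(t \<le> t' \<and> y' \<le> y) \<or> (t' \<le> t \<and> y \<le> y')"
  shows "0 \<le> t' * ((\<Sum>j\<in>UNIV. P' j * q j) - (\<Sum>j\<in>UNIV. P j * q j)) + b * (y' - y)"
proof (cases "N = {}")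
  case True
  then have "P = (\<lambda>_. 0)" and "P' = (\<lambda>_. 0)"
    using P_supp P'_supp by auto
  then show ?thesis
    using conservation by simp
next
  case False
  then obtain j where "j \<in> N"
    by blast
  then obtain d where \<delta>: "\<delta> = ereal d"
    using min[of j] \<delta>_nonneg by (cases \<delta>) auto
  have "d * ((\<Sum>j\<in>UNIV. P' j) - (\<Sum>j\<in>UNIV. P j))
      \<le> (\<Sum>j\<in>UNIV. P' j * q j) - (\<Sum>j\<in>UNIV. P j * q j)"
    by (rule routing_gap_ge[OF P_nonneg P'_nonneg P_supp P'_supp]) (use min active \<delta> in auto)
  moreover have "y - y' = (\<Sum>j\<in>UNIV. P' j) - (\<Sum>j\<in>UNIV. P j)"
    using conservation by linarith
  ultimately have "t' * (d * (y - y')) \<le> t' * ((\<Sum>j\<in>UNIV. P' j * q j) - (\<Sum>j\<in>UNIV. P j * q j))"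
    using t'_nonneg by (simp add: mult_left_mono)
  moreover have "0 \<le> (y' - y) * (b - t' * d)"
    by (rule caching_gap_nonneg[OF _ y_nonneg y'_nonneg _ _ opposite])
      (use \<delta>_nonneg cached uncached \<delta> in auto)
  moreover have "(y' - y) * (b - t' * d) = b * (y' - y) + t' * (d * (y - y'))"
    by (simp add: algebra_simps)
  ultimately show ?thesis
    by linarith
qed

section \<open>Arrival rates and marginal costs of a feasible network\<close>

lemma feasibleD:
  assumes "feasible E S r phi y"
  shows "0 \<le> phi i j k" and "(i, j) \<notin> E \<Longrightarrow> phi i j k = 0" and "0 \<le> y i k"
    and "y i k + (\<Sum>j\<in>UNIV. phi i j k) = (if i \<in> S k then 0 else 1)"
    and "0 \<le> arrival r phi i k"
  using assms unfolding feasible_def by blast+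

lemma arrival_eq:
  assumes "feasible E S r phi y"
  shows "arrival r phi i k = r i k + (\<Sum>j\<in>UNIV. arrival r phi j k * phi j i k)"
proof -
  have "\<exists>!t. arr_eq r phi k t"
    using assms unfolding feasible_def by blast
  then have "arr_eq r phi k (\<lambda>i. arrival r phi i k)"
    unfolding arrival_def by (rule theI')
  then show ?thesis
    unfolding arr_eq_def by blast
qed

lemma invertible_routing:
  assumes "feasible E S r phi y"
  shows "invertible (id_minus_transpose (\<lambda>i j. phi i j k))"
proof (rule invertible_id_minus_transpose)
  show "\<exists>!t. \<forall>i. t i = r i k + (\<Sum>j\<in>UNIV. t j * phi j i k)"
    using assms unfolding feasible_def arr_eq_def by blast
qed

lemma routing_row_sum_le_1:
  assumes "feasible E S r phi y"
  shows "(\<Sum>j\<in>UNIV. phi i j k) \<le> 1"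
  using feasibleD(3,4)[OF assms, of i k] by (auto split: if_splits)

lemma routing_row_eq_0:
  assumes "feasible E S r phi y" and "i \<in> S k \<or> y i k = 1"
  shows "phi i j k = 0"
proof -
  have "(\<Sum>j\<in>UNIV. phi i j k) = 0"
    using assms(2) feasibleD(3,4)[OF assms(1), of i k] sum_nonneg[of UNIV "\<lambda>j. phi i j k"]
      feasibleD(1)[OF assms(1)] by (auto split: if_splits)
  then show ?thesis
    using sum_nonneg_eq_0_iff[of UNIV "\<lambda>j. phi i j k"] feasibleD(1)[OF assms(1)] by simp
qed

lemma linkflow_nonneg:
  assumes "feasible E S r phi y"
  shows "0 \<le> linkflow r phi i j"
  unfolding linkflow_def by (simp add: sum_nonneg feasibleD[OF assms])

lemma cacheload_nonneg:
  assumes "feasible E S r phi y"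
  shows "0 \<le> cacheload y i"
  unfolding cacheload_def by (simp add: sum_nonneg feasibleD[OF assms])

lemma arrival_mono:
  assumes feas: "feasible E S r phi y" and feas': "feasible E S r phi' y'"
    and le: "\<And>i j. phi i j k \<le> phi' i j k"
  shows "arrival r phi i k \<le> arrival r phi' i k"
  by (rule inflow_solution_mono[OF invertible_routing[OF feas'] feasibleD(1)[OF feas] le
        routing_row_sum_le_1[OF feas'] arrival_eq[OF feas] arrival_eq[OF feas'] feasibleD(5)[OF feas]])

lemma cache_antimono:
  assumes feas: "feasible E S r phi y" and feas': "feasible E S r phi' y'"
    and le: "\<And>i j. phi i j k \<le> phi' i j k"
  shows "y' i k \<le> y i k"
proof -
  have "(\<Sum>j\<in>UNIV. phi i j k) \<le> (\<Sum>j\<in>UNIV. phi' i j k)"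
    by (rule sum_mono) (rule le)
  then show ?thesis
    using feasibleD(4)[OF feas, of i k] feasibleD(4)[OF feas', of i k] by simp
qed

lemma arrival_cache_opposite:
  assumes feas: "feasible E S r phi y" and feas': "feasible E S r phi' y'"
    and mono: "(\<forall>i j k. phi' i j k \<ge> phi i j k) \<or> (\<forall>i j k. phi' i j k \<le> phi i j k)"
  shows "(arrival r phi i k \<le> arrival r phi' i k \<and> y' i k \<le> y i k)
       \<or> (arrival r phi' i k \<le> arrival r phi i k \<and> y i k \<le> y' i k)"
  using mono
proof
  assume "\<forall>i j k. phi i j k \<le> phi' i j k"
  then show ?thesis
    using arrival_mono[OF feas feas'] cache_antimono[OF feas feas'] by blast
next
  assume "\<forall>i j k. phi' i j k \<le> phi i j k"
  then show ?thesis
    using arrival_mono[OF feas' feas] cache_antimono[OF feas' feas] by blast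
qed

lemma mc_eq_iff:
  assumes feas: "feasible E S r phi y"
  shows "mc_eq E S D' r phi y k m \<longleftrightarrow>
    (\<forall>i. m i = (\<Sum>j\<in>UNIV. phi i j k * D' j i (linkflow r phi j i)) + (\<Sum>j\<in>UNIV. phi i j k * m j))"
proof -
  have "(if i \<in> S k \<or> y i k = 1 then 0
         else (\<Sum>j\<in>nbrs E i. phi i j k * (D' j i (linkflow r phi j i) + m j)))
      = (\<Sum>j\<in>UNIV. phi i j k * (D' j i (linkflow r phi j i) + m j))" for i
  proof (cases "i \<in> S k \<or> y i k = 1")
    case True
    then show ?thesis
      using routing_row_eq_0[OF feas] by simp
  next
    case False
    have "(\<Sum>j\<in>nbrs E i. phi i j k * (D' j i (linkflow r phi j i) + m j))
        = (\<Sum>j\<in>UNIV. phi i j k * (D' j i (linkflow r phi j i) + m j))"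
      by (rule sum.mono_neutral_left) (auto simp: nbrs_def feasibleD(2)[OF feas])
    with False show ?thesis
      by simp
  qed
  then show ?thesis
    unfolding mc_eq_def by (simp add: distrib_left sum.distrib)
qed

lemma marginal_potential_eq:
  assumes feas: "feasible E S r phi y"
  shows "marginal E S D' r phi y i k
    = (\<Sum>j\<in>UNIV. phi i j k * D' j i (linkflow r phi j i))
      + (\<Sum>j\<in>UNIV. phi i j k * marginal E S D' r phi y j k)"
proof -
  have "\<exists>!m. mc_eq E S D' r phi y k m"
    unfolding mc_eq_iff[OF feas] by (rule ex1_potential_solution[OF invertible_routing[OF feas]])
  then have "mc_eq E S D' r phi y k (\<lambda>i. marginal E S D' r phi y i k)"
    unfolding marginal_def by (rule theI')
  then show ?thesis
    unfolding mc_eq_iff[OF feas] by blast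
qed

lemma marginal_eq:
  assumes "feasible E S r phi y"
  shows "marginal E S D' r phi y i k
    = (\<Sum>j\<in>UNIV. phi i j k * (D' j i (linkflow r phi j i) + marginal E S D' r phi y j k))"
  by (subst marginal_potential_eq[OF assms]) (simp add: distrib_left sum.distrib)

lemma marginal_nonneg:
  assumes feas: "feasible E S r phi y" and D_cost: "\<And>i j. cost_fun (D i j) (D' i j)"
  shows "0 \<le> marginal E S D' r phi y i k"
  by (rule potential_solution_nonneg[OF invertible_routing[OF feas] feasibleD(1)[OF feas]
        routing_row_sum_le_1[OF feas] marginal_potential_eq[OF feas]])
    (simp add: sum_nonneg feasibleD(1)[OF feas] cost_fun_deriv_nonneg[OF D_cost linkflow_nonneg[OF feas]])

lemma delta_le:
  assumes "j \<in> nbrs E i"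
  shows "delta E S D' B' r phi y i k
    \<le> ereal (D' j i (linkflow r phi j i) + marginal E S D' r phi y j k)"
  unfolding delta_def by (rule min.coboundedI2, rule INF_lower[OF assms])

lemma delta_nonneg:
  assumes feas: "feasible E S r phi y"
    and D_cost: "\<And>i j. cost_fun (D i j) (D' i j)" and B_cost: "\<And>i. cost_fun (B i) (B' i)"
  shows "0 \<le> delta E S D' B' r phi y i k"
proof -
  have "0 \<le> B' i (cacheload y i)"
    by (rule cost_fun_deriv_nonneg[OF B_cost cacheload_nonneg[OF feas]])
  then have "0 \<le> (if arrival r phi i k = 0 then \<infinity>
                   else ereal (B' i (cacheload y i) / arrival r phi i k))"
    using feasibleD(5)[OF feas, of i k] by simp
  moreover have "0 \<le> (INF j\<in>nbrs E i. ereal (D' j i (linkflow r phi j i) + marginal E S D' r phi y j k))"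
    by (rule INF_greatest) (simp add: cost_fun_deriv_nonneg[OF D_cost linkflow_nonneg[OF feas]]
        marginal_nonneg[OF feas D_cost])
  ultimately show ?thesis
    unfolding delta_def by simp
qed

lemma MC_D:
  assumes "MC E S D' B' r phi y"
  shows "0 < y i k \<Longrightarrow>
      ereal (B' i (cacheload y i)) = ereal (arrival r phi i k) * delta E S D' B' r phi y i k"
    and "y i k = 0 \<Longrightarrow>
      ereal (arrival r phi i k) * delta E S D' B' r phi y i k \<le> ereal (B' i (cacheload y i))"
    and "j \<in> nbrs E i \<Longrightarrow> 0 < phi i j k \<Longrightarrow>
      ereal (D' j i (linkflow r phi j i) + marginal E S D' r phi y j k) = delta E S D' B' r phi y i k"
  using assms unfolding MC_def by blast+

section \<open>First-order change of the total cost\<close>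

definition linearized_cost_change ::
    "('v::finite \<Rightarrow> 'v \<Rightarrow> real \<Rightarrow> real) \<Rightarrow> ('v \<Rightarrow> real \<Rightarrow> real) \<Rightarrow> ('v \<Rightarrow> 'c::finite \<Rightarrow> real)
      \<Rightarrow> ('v \<Rightarrow> 'v \<Rightarrow> 'c \<Rightarrow> real) \<Rightarrow> ('v \<Rightarrow> 'c \<Rightarrow> real) \<Rightarrow> ('v \<Rightarrow> 'v \<Rightarrow> 'c \<Rightarrow> real) \<Rightarrow> ('v \<Rightarrow> 'c \<Rightarrow> real)
      \<Rightarrow> 'c \<Rightarrow> real" where
  "linearized_cost_change D' B' r phi y phi' y' k =
     (\<Sum>i\<in>UNIV. \<Sum>j\<in>UNIV. D' j i (linkflow r phi j i)
        * (arrival r phi' i k * phi' i j k - arrival r phi i k * phi i j k))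
     + (\<Sum>i\<in>UNIV. B' i (cacheload y i) * (y' i k - y i k))"

lemma linkflow_linearization_eq:
  assumes sym: "\<And>i j. (i, j) \<in> E \<Longrightarrow> (j, i) \<in> E"
    and feas: "feasible E S r phi y" and feas': "feasible E S r phi' y'"
  shows "(\<Sum>(i, j)\<in>E. D' i j (linkflow r phi i j) * (linkflow r phi' i j - linkflow r phi i j))
    = (\<Sum>k\<in>UNIV. \<Sum>i\<in>UNIV. \<Sum>j\<in>UNIV. D' j i (linkflow r phi j i)
         * (arrival r phi' i k * phi' i j k - arrival r phi i k * phi i j k))"
proof -
  define g where "g i j = D' i j (linkflow r phi i j) * (linkflow r phi' i j - linkflow r phi i j)"
    for i j
  have g_out: "g i j = 0" if "(i, j) \<notin> E" for i j
  proof -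
    have "(j, i) \<notin> E"
      using sym that by blast
    then show ?thesis
      by (simp add: g_def linkflow_def feasibleD(2)[OF feas] feasibleD(2)[OF feas'])
  qed
  have "linkflow r phi' j i - linkflow r phi j i
      = (\<Sum>k\<in>UNIV. arrival r phi' i k * phi' i j k - arrival r phi i k * phi i j k)" for i j
    by (simp add: linkflow_def sum_subtractf)
  then have g_eq: "g j i = (\<Sum>k\<in>UNIV. D' j i (linkflow r phi j i)
      * (arrival r phi' i k * phi' i j k - arrival r phi i k * phi i j k))" for i j
    by (simp add: g_def sum_distrib_left)
  have "(\<Sum>(i, j)\<in>E. g i j) = (\<Sum>(i, j)\<in>UNIV. g i j)"
    by (rule sum.mono_neutral_left) (auto simp: g_out)
  also have "\<dots> = (\<Sum>i\<in>UNIV. \<Sum>j\<in>UNIV. g i j)"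
    by (simp only: sum.cartesian_product UNIV_Times_UNIV)
  also have "\<dots> = (\<Sum>i\<in>UNIV. \<Sum>j\<in>UNIV. g j i)"
    by (rule sum.swap)
  also have "\<dots> = (\<Sum>i\<in>UNIV. \<Sum>k\<in>UNIV. \<Sum>j\<in>UNIV. D' j i (linkflow r phi j i)
         * (arrival r phi' i k * phi' i j k - arrival r phi i k * phi i j k))"
    unfolding g_eq by (rule sum.cong[OF refl], rule sum.swap)
  also have "\<dots> = (\<Sum>k\<in>UNIV. \<Sum>i\<in>UNIV. \<Sum>j\<in>UNIV. D' j i (linkflow r phi j i)
         * (arrival r phi' i k * phi' i j k - arrival r phi i k * phi i j k))"
    by (rule sum.swap)
  finally show ?thesis
    by (simp only: g_def)
qed

lemma cacheload_linearization_eq: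
  "(\<Sum>i\<in>UNIV. B' i (cacheload y i) * (cacheload y' i - cacheload y i))
    = (\<Sum>k\<in>UNIV. \<Sum>i\<in>UNIV. B' i (cacheload y i) * (y' i k - y i k))"
proof -
  have "cacheload y' i - cacheload y i = (\<Sum>k\<in>UNIV. y' i k - y i k)" for i
    by (simp add: cacheload_def sum_subtractf)
  then have "(\<Sum>i\<in>UNIV. B' i (cacheload y i) * (cacheload y' i - cacheload y i))
      = (\<Sum>i\<in>UNIV. \<Sum>k\<in>UNIV. B' i (cacheload y i) * (y' i k - y i k))"
    by (simp add: sum_distrib_left)
  also have "\<dots> = (\<Sum>k\<in>UNIV. \<Sum>i\<in>UNIV. B' i (cacheload y i) * (y' i k - y i k))"
    by (rule sum.swap)
  finally show ?thesis .
qed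

lemma sum_linearized_cost_change_le:
  assumes sym: "\<And>i j. (i, j) \<in> E \<Longrightarrow> (j, i) \<in> E"
    and D_cost: "\<And>i j. cost_fun (D i j) (D' i j)" and B_cost: "\<And>i. cost_fun (B i) (B' i)"
    and feas: "feasible E S r phi y" and feas': "feasible E S r phi' y'"
  shows "(\<Sum>k\<in>UNIV. linearized_cost_change D' B' r phi y phi' y' k)
    \<le> total_cost E D B r phi' y' - total_cost E D B r phi y"
proof -
  have "(\<Sum>k\<in>UNIV. linearized_cost_change D' B' r phi y phi' y' k)
      = (\<Sum>k\<in>UNIV. \<Sum>i\<in>UNIV. \<Sum>j\<in>UNIV. D' j i (linkflow r phi j i)
           * (arrival r phi' i k * phi' i j k - arrival r phi i k * phi i j k))
        + (\<Sum>k\<in>UNIV. \<Sum>i\<in>UNIV. B' i (cacheload y i) * (y' i k - y i k))"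
    unfolding linearized_cost_change_def by (rule sum.distrib)
  also have "\<dots> = (\<Sum>(i, j)\<in>E. D' i j (linkflow r phi i j) * (linkflow r phi' i j - linkflow r phi i j))
        + (\<Sum>i\<in>UNIV. B' i (cacheload y i) * (cacheload y' i - cacheload y i))"
    by (rule arg_cong2[where f = "(+)", OF linkflow_linearization_eq[OF sym feas feas', symmetric]
          cacheload_linearization_eq[symmetric]])
  also have "\<dots> \<le> (\<Sum>(i, j)\<in>E. D i j (linkflow r phi' i j) - D i j (linkflow r phi i j))
        + (\<Sum>i\<in>UNIV. B i (cacheload y' i) - B i (cacheload y i))"
  proof (rule add_mono)
    show "(\<Sum>(i, j)\<in>E. D' i j (linkflow r phi i j) * (linkflow r phi' i j - linkflow r phi i j))
        \<le> (\<Sum>(i, j)\<in>E. D i j (linkflow r phi' i j) - D i j (linkflow r phi i j))"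
      by (rule sum_mono) (simp add: case_prod_beta
          cost_fun_above_tangent[OF D_cost linkflow_nonneg[OF feas'] linkflow_nonneg[OF feas]])
    show "(\<Sum>i\<in>UNIV. B' i (cacheload y i) * (cacheload y' i - cacheload y i))
        \<le> (\<Sum>i\<in>UNIV. B i (cacheload y' i) - B i (cacheload y i))"
      by (rule sum_mono)
        (rule cost_fun_above_tangent[OF B_cost cacheload_nonneg[OF feas'] cacheload_nonneg[OF feas]])
  qed
  also have "\<dots> = total_cost E D B r phi' y' - total_cost E D B r phi y"
    unfolding total_cost_def by (simp add: case_prod_beta sum_subtractf)
  finally show ?thesis .
qed

lemma linearized_cost_change_nonneg:
  assumes D_cost: "\<And>i j. cost_fun (D i j) (D' i j)" and B_cost: "\<And>i. cost_fun (B i) (B' i)"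
    and feas: "feasible E S r phi y" and mc: "MC E S D' B' r phi y"
    and feas': "feasible E S r phi' y'"
    and mono: "(\<forall>i j k. phi' i j k \<ge> phi i j k) \<or> (\<forall>i j k. phi' i j k \<le> phi i j k)"
  shows "0 \<le> linearized_cost_change D' B' r phi y phi' y' k"
proof -
  define q where "q i j = D' j i (linkflow r phi j i) + marginal E S D' r phi y j k" for i j
  have marginal_q: "marginal E S D' r phi y i k = (\<Sum>j\<in>UNIV. phi i j k * q i j)" for i
    unfolding q_def by (rule marginal_eq[OF feas])
  have supp: "phi i j k = 0" "phi' i j k = 0" if "j \<notin> nbrs E i" for i j
    using that feasibleD(2)[OF feas] feasibleD(2)[OF feas'] by (auto simp: nbrs_def)
  have conservation: "y i k + (\<Sum>j\<in>UNIV. phi i j k) = y' i k + (\<Sum>j\<in>UNIV. phi' i j k)" for i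
    using feasibleD(4)[OF feas, of i k] feasibleD(4)[OF feas', of i k] by simp
  have min: "delta E S D' B' r phi y i k \<le> ereal (q i j)" if "j \<in> nbrs E i" for i j
    unfolding q_def using that by (rule delta_le)
  have active: "ereal (q i j) = delta E S D' B' r phi y i k" if "j \<in> nbrs E i" and "0 < phi i j k"
    for i j
    unfolding q_def using that by (rule MC_D(3)[OF mc])
  have node: "0 \<le> arrival r phi' i k * ((\<Sum>j\<in>UNIV. phi' i j k * q i j) - (\<Sum>j\<in>UNIV. phi i j k * q i j))
      + B' i (cacheload y i) * (y' i k - y i k)" for i
    by (rule node_gap_nonneg[where P = "\<lambda>j. phi i j k" and P' = "\<lambda>j. phi' i j k" and q = "q i"
          and N = "nbrs E i" and \<delta> = "delta E S D' B' r phi y i k" and y = "y i k" and y' = "y' i k"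
          and t = "arrival r phi i k" and t' = "arrival r phi' i k" and b = "B' i (cacheload y i)",
          OF feasibleD(1)[OF feas] feasibleD(1)[OF feas'] supp conservation min active
          delta_nonneg[OF feas D_cost B_cost] MC_D(1,2)[OF mc] feasibleD(3)[OF feas]
          feasibleD(3)[OF feas'] feasibleD(5)[OF feas'] arrival_cache_opposite[OF feas feas' mono]])
  have "(\<Sum>i\<in>UNIV. \<Sum>j\<in>UNIV. D' j i (linkflow r phi j i)
          * (arrival r phi' i k * phi' i j k - arrival r phi i k * phi i j k))
      = (\<Sum>i\<in>UNIV. arrival r phi' i k
          * ((\<Sum>j\<in>UNIV. phi' i j k * q i j) - marginal E S D' r phi y i k))"
    unfolding q_def
    by (rule potential_telescoping[OF arrival_eq[OF feas] arrival_eq[OF feas'] marginal_eq[OF feas]])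
  then have "linearized_cost_change D' B' r phi y phi' y' k
      = (\<Sum>i\<in>UNIV. arrival r phi' i k
          * ((\<Sum>j\<in>UNIV. phi' i j k * q i j) - (\<Sum>j\<in>UNIV. phi i j k * q i j))
          + B' i (cacheload y i) * (y' i k - y i k))"
    unfolding linearized_cost_change_def marginal_q by (simp add: sum.distrib)
  also have "\<dots> \<ge> 0"
    by (rule sum_nonneg) (rule node)
  finally show ?thesis .
qed

theorem corollary3:
  fixes E :: "('v::finite \<times> 'v) set"
    and S :: "'c::finite \<Rightarrow> 'v set"
    and r :: "'v \<Rightarrow> 'c \<Rightarrow> real"
    and D D' :: "'v \<Rightarrow> 'v \<Rightarrow> real \<Rightarrow> real"
    and B B' :: "'v \<Rightarrow> real \<Rightarrow> real"
    and phi phi' :: "'v \<Rightarrow> 'v \<Rightarrow> 'c \<Rightarrow> real"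
    and y y' :: "'v \<Rightarrow> 'c \<Rightarrow> real"
  assumes sym: "\<And>i j. (i, j) \<in> E \<Longrightarrow> (j, i) \<in> E"
    and servers: "\<And>k. S k \<noteq> {}"
    and r_nonneg: "\<And>i k. 0 \<le> r i k"
    and D_cost: "\<And>i j. cost_fun (D i j) (D' i j)"
    and B_cost: "\<And>i. cost_fun (B i) (B' i)"
    and feas: "feasible E S r phi y"
    and mc: "MC E S D' B' r phi y"
    and feas': "feasible E S r phi' y'"
    and mono: "(\<forall>i j k. phi' i j k \<ge> phi i j k) \<or> (\<forall>i j k. phi' i j k \<le> phi i j k)"
  shows "total_cost E D B r phi y \<le> total_cost E D B r phi' y'"
proof -
  have "0 \<le> (\<Sum>k\<in>UNIV. linearized_cost_change D' B' r phi y phi' y' k)"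
    by (rule sum_nonneg) (rule linearized_cost_change_nonneg[OF D_cost B_cost feas mc feas' mono])
  also have "\<dots> \<le> total_cost E D B r phi' y' - total_cost E D B r phi y"
    by (rule sum_linearized_cost_change_le[OF sym D_cost B_cost feas feas'])
  finally show ?thesis
    by simp
qed

end
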